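(* Let $m=2$, $\mu = (\mu_1,\mu_2)^\top\in\mathbb{R}^2$, and let $M = \begin{bmatrix} M_{11} & M_{12}\\ M_{12} & M_{22}\end{bmatrix}$ be a symmetric positive semidefinite matrix that is row-stochastic (non-negative entries, each row summing to $1$). Let $z\sim\mathcal{N}(\mu, M)$ and $p = (p_1,p_2) := \mathrm{softmax}(z)$. Let $q' = (1,0)^\top$ and $p' := M^\top q' = (M_{11}, M_{12})^\top$. Define $\alpha_{\mathrm{TLI}} := \min\{p_1,1\} + \min\{p_2, 0\}$ and $\alpha_{\mathrm{RDK}} := \min\{p_1, p'_1\} + \min\{p_2, p'_2\}$. Assume $\mu_1 + 3\sqrt{M_{11}} \le \mu_2 - 3\sqrt{M_{22}}$. Then, with probability at least $99.46\%$ over $z$, \[ \alpha_{\mathrm{TLI}} \le \alpha_{\mathrm{RDK}} . \]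
   Context: $\mathrm{softmax}(z)_i = \exp(z_i)/(\exp(z_1)+\exp(z_2))$. Here $\alpha_{\mathrm{TLI}}$ is the acceptance rate $\sum_x \min\{p(x), q'(x)\}$ between $p$ and the TLI drafter $q'$, and $\alpha_{\mathrm{RDK}}$ is the acceptance rate between $p$ and the redistributed drafter $p'$. *)

theory Defs
  imports "HOL-Probability.Probability"
begin

definition normal_rv :: "'a measure \<Rightarrow> ('a \<Rightarrow> real) \<Rightarrow> real \<Rightarrow> real \<Rightarrow> bool" where
  "normal_rv P X m v \<longleftrightarrow>
     (if v > 0 then distributed P lborel X (\<lambda>x. ennreal (normal_density m (sqrt v) x))
      else X \<in> borel_measurable P \<and> (AE \<omega> in P. X \<omega> = m))"

text \<open>z = (z_1, z_2) ~ N(mu, M) with mu = (mu1, mu2), M = [[M11, M12],[M12, M22]]: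
  every linear combination a z_1 + b z_2 is normal with mean a mu1 + b mu2 and
  variance (a,b) M (a,b)^T (standard definition of a possibly degenerate Gaussian vector).\<close>
definition gaussian2 :: "'a measure \<Rightarrow> ('a \<Rightarrow> real \<times> real) \<Rightarrow> real \<Rightarrow> real \<Rightarrow> real \<Rightarrow> real \<Rightarrow> real \<Rightarrow> bool" where
  "gaussian2 P z mu1 mu2 M11 M12 M22 \<longleftrightarrow>
     (\<forall>a b. normal_rv P (\<lambda>\<omega>. a * fst (z \<omega>) + b * snd (z \<omega>)) (a * mu1 + b * mu2)
                 (a\<^sup>2 * M11 + 2 * a * b * M12 + b\<^sup>2 * M22))"

definition softmax2 :: "real \<times> real \<Rightarrow> real \<times> real" where
  "softmax2 z = (exp (fst z) / (exp (fst z) + exp (snd z)), exp (snd z) / (exp (fst z) + exp (snd z)))"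

definition accept2 :: "real \<times> real \<Rightarrow> real \<times> real \<Rightarrow> real" where
  "accept2 p q = min (fst p) (fst q) + min (snd p) (snd q)"

end

theory Submission
  imports Defs
begin

text \<open>Row-stochasticity and symmetry force M11 = M22 = c and M12 = 1 - c, and positive
  semidefiniteness in direction (1, -1) gives c \<ge> 1/2. On the event z1 \<le> z2 the softmax puts
  mass p1 \<le> 1/2 on the first token, and then the inequality holds pointwise. The difference
  z1 - z2 is normal with mean mu1 - mu2 \<le> -6 sqrt c and variance 4c - 2 \<le> 2c, so its sixth
  moment bounds the probability of the complementary event z1 > z2 by
  15 (2c)^3 / (6 sqrt c)^6 < 0.0026.\<close>

lemma snd_softmax2: "snd (softmax2 x) = 1 - fst (softmax2 x)"
proof -
  have "exp (fst x) + exp (snd x) > 0" by (simp add: add_pos_pos)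
  then show ?thesis unfolding softmax2_def by (simp add: field_simps)
qed

lemma fst_softmax2_nonneg: "0 \<le> fst (softmax2 x)"
  unfolding softmax2_def by (simp add: add_pos_pos less_imp_le)

lemma fst_softmax2_le_half:
  assumes "fst x \<le> snd x"
  shows "fst (softmax2 x) \<le> 1 / 2"
proof -
  have "exp (fst x) \<le> exp (snd x)" using assms by simp
  moreover have "exp (fst x) + exp (snd x) > 0" by (simp add: add_pos_pos)
  ultimately show ?thesis unfolding softmax2_def by (simp add: field_simps)
qed

lemma accept2_onehot_le:
  fixes p c :: real
  assumes "0 \<le> p" "p \<le> 1 / 2" "0 \<le> c" "c \<le> 1"
  shows "accept2 (p, 1 - p) (1, 0) \<le> accept2 (p, 1 - p) (c, 1 - c)"
  using assms unfolding accept2_def by (simp add: min_def)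

lemma accept2_softmax2_onehot_le:
  assumes "fst x \<le> snd x" "0 \<le> c" "c \<le> 1"
  shows "accept2 (softmax2 x) (1, 0) \<le> accept2 (softmax2 x) (c, 1 - c)"
proof -
  have "softmax2 x = (fst (softmax2 x), 1 - fst (softmax2 x))"
    by (metis prod.collapse snd_softmax2)
  with assms fst_softmax2_nonneg fst_softmax2_le_half show ?thesis
    by (metis accept2_onehot_le)
qed

lemma normal_density_upper_tail_le:
  fixes m s t :: real
  assumes "0 < s" "0 < t"
  shows "(\<integral>x. normal_density m s x * indicator {m + t<..} x \<partial>lborel) \<le> 15 * s ^ 6 / t ^ 6"
proof -
  have "(\<integral>x. normal_density m s x * indicator {m + t<..} x \<partial>lborel)
       \<le> (\<integral>x. normal_density m s x * (x - m) ^ (2 * 3) / t ^ 6 \<partial>lborel)"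
  proof (rule integral_mono)
    show "integrable lborel (\<lambda>x. normal_density m s x * indicator {m + t<..} x)"
      by (rule integrable_real_mult_indicator) (use assms in auto)
    show "integrable lborel (\<lambda>x. normal_density m s x * (x - m) ^ (2 * 3) / t ^ 6)"
      using integrable_normal_moment[OF assms(1), of m "2 * 3"] by simp
    fix x :: real
    have "indicator {m + t<..} x \<le> (x - m) ^ (2 * 3) / t ^ 6"
    proof (cases "m + t < x")
      case True
      then have "t ^ 6 \<le> (x - m) ^ 6" using assms by (intro power_mono) auto
      with True assms show ?thesis by simp
    qed (simp add: power_mult)
    from mult_left_mono[OF this normal_density_nonneg]
    show "normal_density m s x * indicator {m + t<..} x \<le> normal_density m s x * (x - m) ^ (2 * 3) / t ^ 6"
      by simp
  qed
  also have "\<dots> = (\<integral>x. normal_density m s x * (x - m) ^ (2 * 3) \<partial>lborel) / t ^ 6"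
    by simp
  also have "\<dots> = 15 * s ^ 6 / t ^ 6"
    using integral_normal_moment_even[OF assms(1), of m 3]
    by (simp add: fact_numeral power_divide field_simps)
  finally show ?thesis .
qed

lemma normal_rv_measurable: "normal_rv M X m v \<Longrightarrow> X \<in> borel_measurable M"
  unfolding normal_rv_def by (auto split: if_splits dest: distributed_measurable)

lemma (in prob_space) normal_rv_upper_tail_le:
  assumes X: "normal_rv M X m v" and "0 \<le> v" "0 < t"
  shows "prob {\<omega> \<in> space M. m + t < X \<omega>} \<le> 15 * v ^ 3 / t ^ 6"
proof (cases "v > 0")
  case True
  define s where "s = sqrt v"
  have "s > 0" using True unfolding s_def by simp
  have "s ^ 6 = (s\<^sup>2) ^ 3" by (simp flip: power_mult)
  also have "\<dots> = v ^ 3" using True unfolding s_def by simp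
  finally have "s ^ 6 = v ^ 3" .
  have dist: "distributed M lborel X (\<lambda>x. ennreal (normal_density m s x))"
    using X True unfolding normal_rv_def s_def by simp
  have "prob {\<omega> \<in> space M. m + t < X \<omega>} = (\<integral>\<omega>. indicator {\<omega> \<in> space M. m + t < X \<omega>} \<omega> \<partial>M)"
    by (simp add: Int_absorb2)
  also have "\<dots> = (\<integral>\<omega>. indicator {m + t<..} (X \<omega>) \<partial>M)"
    by (rule Bochner_Integration.integral_cong) (auto simp: indicator_def)
  also have "\<dots> = (\<integral>x. normal_density m s x * indicator {m + t<..} x \<partial>lborel)"
    by (rule distributed_integral[OF dist, symmetric]) auto
  also have "\<dots> \<le> 15 * s ^ 6 / t ^ 6"
    by (rule normal_density_upper_tail_le) fact+
  finally show ?thesis using \<open>s ^ 6 = v ^ 3\<close> by simp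
next
  case False
  then have "AE \<omega> in M. X \<omega> = m" using X unfolding normal_rv_def by simp
  then have "AE \<omega> in M. \<not> m + t < X \<omega>" using \<open>0 < t\<close> by (auto elim: AE_mp)
  then have "prob {\<omega> \<in> space M. m + t < X \<omega>} = 0" by (rule prob_eq_0_AE)
  with \<open>0 \<le> v\<close> show ?thesis by simp
qed

lemma gaussian2_measurable_components:
  assumes "gaussian2 M z mu1 mu2 M11 M12 M22"
  shows "(\<lambda>\<omega>. fst (z \<omega>)) \<in> borel_measurable M" "(\<lambda>\<omega>. snd (z \<omega>)) \<in> borel_measurable M"
proof -
  have "normal_rv M (\<lambda>\<omega>. 1 * fst (z \<omega>) + 0 * snd (z \<omega>)) (1 * mu1 + 0 * mu2)
          (1\<^sup>2 * M11 + 2 * 1 * 0 * M12 + 0\<^sup>2 * M22)"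
       "normal_rv M (\<lambda>\<omega>. 0 * fst (z \<omega>) + 1 * snd (z \<omega>)) (0 * mu1 + 1 * mu2)
          (0\<^sup>2 * M11 + 2 * 0 * 1 * M12 + 1\<^sup>2 * M22)"
    using assms unfolding gaussian2_def by blast+
  then show "(\<lambda>\<omega>. fst (z \<omega>)) \<in> borel_measurable M" "(\<lambda>\<omega>. snd (z \<omega>)) \<in> borel_measurable M"
    by (auto dest: normal_rv_measurable)
qed

lemma gaussian2_diff:
  assumes "gaussian2 M z mu1 mu2 M11 M12 M22"
  shows "normal_rv M (\<lambda>\<omega>. fst (z \<omega>) - snd (z \<omega>)) (mu1 - mu2) (M11 - 2 * M12 + M22)"
proof -
  have "normal_rv M (\<lambda>\<omega>. 1 * fst (z \<omega>) + (-1) * snd (z \<omega>)) (1 * mu1 + (-1) * mu2)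
          (1\<^sup>2 * M11 + 2 * 1 * (-1) * M12 + (-1)\<^sup>2 * M22)"
    using assms unfolding gaussian2_def by blast
  then show ?thesis by simp
qed

lemma sixth_moment_ratio_le:
  fixes c t :: real
  assumes "1 / 2 \<le> c" "c \<le> 1" "6 * sqrt c \<le> t"
  shows "15 * (4 * c - 2) ^ 3 / t ^ 6 \<le> 54 / 10000"
proof -
  have "15 * (4 * c - 2) ^ 3 / t ^ 6 \<le> 15 * (2 * c) ^ 3 / (36 * c) ^ 3"
  proof (rule frac_le)
    have "(6 * sqrt c)\<^sup>2 \<le> t\<^sup>2" using assms by (intro power_mono) auto
    then have "(36 * c) ^ 3 \<le> (t\<^sup>2) ^ 3" using assms by (intro power_mono) auto
    then show "(36 * c) ^ 3 \<le> t ^ 6" by (simp flip: power_mult)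
    show "15 * (4 * c - 2) ^ 3 \<le> 15 * (2 * c) ^ 3"
      using assms by (intro mult_left_mono power_mono) auto
  qed (use assms in simp_all)
  also have "\<dots> \<le> 54 / 10000" using assms by (simp add: power_mult_distrib)
  finally show ?thesis .
qed

theorem theorem3:
  fixes P :: "'a measure" and z :: "'a \<Rightarrow> real \<times> real"
    and mu1 mu2 M11 M12 M22 :: real
  assumes "prob_space P"
    and psd: "\<forall>x1 x2. x1\<^sup>2 * M11 + 2 * x1 * x2 * M12 + x2\<^sup>2 * M22 \<ge> 0"
    and nonneg: "M11 \<ge> 0" "M12 \<ge> 0" "M22 \<ge> 0"
    and rows: "M11 + M12 = 1" "M12 + M22 = 1"
    and gauss: "gaussian2 P z mu1 mu2 M11 M12 M22"
    and sep: "mu1 + 3 * sqrt M11 \<le> mu2 - 3 * sqrt M22"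
  shows "measure P {\<omega> \<in> space P.
           accept2 (softmax2 (z \<omega>)) (1, 0) \<le> accept2 (softmax2 (z \<omega>)) (M11, M12)}
         \<ge> 9946 / 10000"
proof -
  interpret prob_space P by fact
  define c where "c = M11"
  have M12: "M12 = 1 - c" and M22: "M22 = c" using rows unfolding c_def by linarith+
  have "c \<le> 1" using nonneg M12 by simp
  have "0 \<le> 1\<^sup>2 * M11 + 2 * 1 * (-1) * M12 + (-1)\<^sup>2 * M22" using psd by blast
  then have "1 / 2 \<le> c" unfolding M12 M22 c_def by simp
  have "6 * sqrt c \<le> mu2 - mu1" using sep unfolding M22 c_def by simp
  moreover have "0 < sqrt c" using \<open>1 / 2 \<le> c\<close> by simp
  ultimately have "0 < mu2 - mu1" by linarith
  define G where "G = {\<omega> \<in> space P.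
           accept2 (softmax2 (z \<omega>)) (1, 0) \<le> accept2 (softmax2 (z \<omega>)) (M11, M12)}"
  define B where "B = {\<omega> \<in> space P. snd (z \<omega>) < fst (z \<omega>)}"
  have "space P - B \<subseteq> G"
    unfolding B_def G_def M12 c_def[symmetric]
    using \<open>c \<le> 1\<close> \<open>1 / 2 \<le> c\<close> by (auto intro!: accept2_softmax2_onehot_le)
  have "prob B \<le> 15 * (4 * c - 2) ^ 3 / (mu2 - mu1) ^ 6"
    using normal_rv_upper_tail_le[OF gaussian2_diff[OF gauss], of "mu2 - mu1"]
      \<open>1 / 2 \<le> c\<close> \<open>0 < mu2 - mu1\<close>
    unfolding B_def M12 M22 c_def by simp
  also have "\<dots> \<le> 54 / 10000"
    by (rule sixth_moment_ratio_le) fact+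
  finally have "prob B \<le> 54 / 10000" .
  have "B \<in> events" "G \<in> events"
    using gaussian2_measurable_components[OF gauss] unfolding B_def G_def accept2_def softmax2_def
    by measurable
  then have "1 - prob B \<le> prob G"
    using \<open>space P - B \<subseteq> G\<close> by (metis finite_measure_mono prob_compl sets.compl_sets)
  with \<open>prob B \<le> 54 / 10000\<close> show ?thesis unfolding G_def by simp
qed

end
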